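(* Let $(\mathcal{C},\mathbb{E},\mathfrak{s})$ be an extriangulated category with enough injective objects and enough projective morphisms, and let $\mathbb{F}\subseteq\mathbb{E}$ be an additive subfunctor having enough injective morphisms. Then the following are equivalent: (1) $\mathbb{F}$ has enough special injective morphisms; (2) $\mathbb{F}=\mathrm{Ph}(\mathbb{F})^\star$; (3) $\mathrm{Ph}(\mathbb{F})^{\perp_{\mathbb{E}}}=\mathbb{F}\text{-}\mathrm{inj}$.
   Context: An extriangulated category $(\mathcal{C},\mathbb{E},\mathfrak{s})$ (Nakaoka–Palu): additive $\mathcal{C}$, biadditive $\mathbb{E}:\mathcal{C}^{\mathrm{op}}\times\mathcal{C}\to\mathrm{Ab}$, additive realization $\mathfrak{s}$ assigning to each $\delta\in\mathbb{E}(C,A)$ an equivalence class of sequences $A\to B\to C$, forming $\mathbb{E}$-triangles $A\to B\to C\overset{\delta}{\dashrightarrow}$, satisfying (ET1)–(ET4), (ET3)$^{\mathrm{op}}$, (ET4)$^{\mathrm{op}}$. Notation $a_\star\delta=\mathbb{E}(C,a)(\delta)$, $c^\star\delta=\mathbb{E}(c,A)(\delta)$; a morphism of $\mathbb{E}$-triangles is a commuting triple $(a,b,c)$ with $a_\star\delta=c^\star\delta'$. Enough injective objects: every $A$ admits an $\mathbb{E}$-triangle $A\to E\to C\overset{\delta}{\dashrightarrow}$ with $\mathbb{E}(-,E)=0$. Enough projective morphisms: every $C$ admits an $\mathbb{E}$-triangle $K\to P\xrightarrow{p}C\overset{\gamma}{\dashrightarrow}$ with $p^\star\delta=0$ for all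 $\delta\in\mathbb{E}(C,A)$. Additive subfunctor $\mathbb{F}$: subgroups $\mathbb{F}(C,A)\subseteq\mathbb{E}(C,A)$ stable under $a_\star,c^\star$; $\mathbb{F}$-triangles have extension in $\mathbb{F}$. $\mathrm{Ph}(\mathbb{F})$: morphisms $\varphi:X\to C$ with $\varphi^\star\delta\in\mathbb{F}(X,A)$ for all $\delta\in\mathbb{E}(C,A)$ (an ideal). $\mathbb{F}\text{-}\mathrm{inj}$: $i:A\to Y$ with $i_\star\delta=0$ for all $\delta\in\mathbb{F}(C,A)$. For an ideal $\mathcal{I}$, $\mathcal{I}^\star(X,A)=\{i^\star\delta\mid i\in\mathcal{I}(X,C),\delta\in\mathbb{E}(C,A)\}$ and $\mathcal{I}^{\perp_{\mathbb{E}}}=\{g:A\to Y\mid m^\star g_\star\delta=0\ \forall m\in\mathcal{I},\,m:X\to C,\ \forall\delta\in\mathbb{E}(C,A)\}$. $\mathbb{F}$ has enough injective morphisms: every $A$ admits an $\mathbb{F}$-triangle $A\xrightarrow{e}B\to C\overset{\delta}{\dashrightarrow}$ with $e\in\mathbb{F}\text{-}\mathrm{inj}$; enough special injective morphisms: moreover there is an $\mathbb{E}$-triangle $A\to B'\to C'\overset{\delta'}{\dashrightarrow}$ and a morphism $(\mathrm{id}_A,b,\varphi)$ from the former to it with $\varphi\in\mathrm{Ph}(\mathbb{F})$. *)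

theory Defs
  imports Main
begin

text \<open>Objects of type 'o, morphisms of type 'm (each with a source and target),
  extensions of type 'e (each delta in E(C,A) carries edom = C and ecod = A).
  cmp g f is the composite g o f.  push a delta is a_star delta, pull c delta is c^star delta.
  realizes delta x y means that the sequence A -x-> B -y-> C belongs to the
  equivalence class s(delta).\<close>

record ('o,'m,'e) ext_cat_data =
  obj :: "'o set"
  mor :: "'m set"
  src :: "'m \<Rightarrow> 'o"
  tgt :: "'m \<Rightarrow> 'o"
  cmp :: "'m \<Rightarrow> 'm \<Rightarrow> 'm"
  idm :: "'o \<Rightarrow> 'm"
  madd :: "'m \<Rightarrow> 'm \<Rightarrow> 'm"
  mzero :: "'o \<Rightarrow> 'o \<Rightarrow> 'm"
  mneg :: "'m \<Rightarrow> 'm"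
  eel :: "'e set"
  edom :: "'e \<Rightarrow> 'o"
  ecod :: "'e \<Rightarrow> 'o"
  eadd :: "'e \<Rightarrow> 'e \<Rightarrow> 'e"
  ezero :: "'o \<Rightarrow> 'o \<Rightarrow> 'e"
  eneg :: "'e \<Rightarrow> 'e"
  push :: "'m \<Rightarrow> 'e \<Rightarrow> 'e"
  pull :: "'m \<Rightarrow> 'e \<Rightarrow> 'e"
  realizes :: "'e \<Rightarrow> 'm \<Rightarrow> 'm \<Rightarrow> bool"

definition hom :: "('o,'m,'e,'z) ext_cat_data_scheme \<Rightarrow> 'o \<Rightarrow> 'o \<Rightarrow> 'm set" where
  "hom R X Y = {f \<in> mor R. src R f = X \<and> tgt R f = Y}"

definition ext :: "('o,'m,'e,'z) ext_cat_data_scheme \<Rightarrow> 'o \<Rightarrow> 'o \<Rightarrow> 'e set" where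
  "ext R C A = {d \<in> eel R. edom R d = C \<and> ecod R d = A}"

definition is_category :: "('o,'m,'e,'z) ext_cat_data_scheme \<Rightarrow> bool" where
  "is_category R \<longleftrightarrow>
     (\<forall>f\<in>mor R. src R f \<in> obj R \<and> tgt R f \<in> obj R) \<and>
     (\<forall>X\<in>obj R. idm R X \<in> hom R X X) \<and>
     (\<forall>X Y Z f g. f \<in> hom R X Y \<longrightarrow> g \<in> hom R Y Z \<longrightarrow> cmp R g f \<in> hom R X Z) \<and>
     (\<forall>X Y f. f \<in> hom R X Y \<longrightarrow> cmp R (idm R Y) f = f \<and> cmp R f (idm R X) = f) \<and>
     (\<forall>W X Y Z f g h. f \<in> hom R W X \<longrightarrow> g \<in> hom R X Y \<longrightarrow> h \<in> hom R Y Z \<longrightarrow>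
         cmp R h (cmp R g f) = cmp R (cmp R h g) f)"

definition is_preadditive :: "('o,'m,'e,'z) ext_cat_data_scheme \<Rightarrow> bool" where
  "is_preadditive R \<longleftrightarrow> is_category R \<and>
     (\<forall>X\<in>obj R. \<forall>Y\<in>obj R.
        mzero R X Y \<in> hom R X Y \<and>
        (\<forall>f\<in>hom R X Y. \<forall>g\<in>hom R X Y. madd R f g \<in> hom R X Y \<and> madd R f g = madd R g f) \<and>
        (\<forall>f\<in>hom R X Y. mneg R f \<in> hom R X Y \<and> madd R f (mzero R X Y) = f \<and>
            madd R f (mneg R f) = mzero R X Y) \<and>
        (\<forall>f\<in>hom R X Y. \<forall>g\<in>hom R X Y. \<forall>h\<in>hom R X Y.
            madd R (madd R f g) h = madd R f (madd R g h))) \<and>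
     (\<forall>W X Y Z f g h k. f \<in> hom R X Y \<longrightarrow> g \<in> hom R X Y \<longrightarrow> h \<in> hom R Y Z \<longrightarrow> k \<in> hom R W X \<longrightarrow>
        cmp R h (madd R f g) = madd R (cmp R h f) (cmp R h g) \<and>
        cmp R (madd R f g) k = madd R (cmp R f k) (cmp R g k))"

definition is_zero_obj :: "('o,'m,'e,'z) ext_cat_data_scheme \<Rightarrow> 'o \<Rightarrow> bool" where
  "is_zero_obj R Z \<longleftrightarrow> Z \<in> obj R \<and> idm R Z = mzero R Z Z"

definition is_biproduct :: "('o,'m,'e,'z) ext_cat_data_scheme \<Rightarrow> 'o \<Rightarrow> 'o \<Rightarrow> 'o \<Rightarrow> 'm \<Rightarrow> 'm \<Rightarrow> 'm \<Rightarrow> 'm \<Rightarrow> bool" where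
  "is_biproduct R A B P i1 i2 p1 p2 \<longleftrightarrow> P \<in> obj R \<and>
     i1 \<in> hom R A P \<and> i2 \<in> hom R B P \<and> p1 \<in> hom R P A \<and> p2 \<in> hom R P B \<and>
     cmp R p1 i1 = idm R A \<and> cmp R p2 i2 = idm R B \<and>
     cmp R p1 i2 = mzero R B A \<and> cmp R p2 i1 = mzero R A B \<and>
     madd R (cmp R i1 p1) (cmp R i2 p2) = idm R P"

definition is_additive :: "('o,'m,'e,'z) ext_cat_data_scheme \<Rightarrow> bool" where
  "is_additive R \<longleftrightarrow> is_preadditive R \<and> (\<exists>Z. is_zero_obj R Z) \<and>
     (\<forall>A\<in>obj R. \<forall>B\<in>obj R. \<exists>P i1 i2 p1 p2. is_biproduct R A B P i1 i2 p1 p2)"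

definition ET1 :: "('o,'m,'e,'z) ext_cat_data_scheme \<Rightarrow> bool" where
  "ET1 R \<longleftrightarrow>
     (\<forall>C\<in>obj R. \<forall>A\<in>obj R.
        ezero R C A \<in> ext R C A \<and>
        (\<forall>d\<in>ext R C A. \<forall>d'\<in>ext R C A. eadd R d d' \<in> ext R C A \<and> eadd R d d' = eadd R d' d) \<and>
        (\<forall>d\<in>ext R C A. eneg R d \<in> ext R C A \<and> eadd R d (ezero R C A) = d \<and>
            eadd R d (eneg R d) = ezero R C A) \<and>
        (\<forall>d\<in>ext R C A. \<forall>d'\<in>ext R C A. \<forall>d''\<in>ext R C A.
            eadd R (eadd R d d') d'' = eadd R d (eadd R d' d''))) \<and>
     (\<forall>C A A' a d. a \<in> hom R A A' \<longrightarrow> d \<in> ext R C A \<longrightarrow> push R a d \<in> ext R C A') \<and>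
     (\<forall>C C' A c d. c \<in> hom R C' C \<longrightarrow> d \<in> ext R C A \<longrightarrow> pull R c d \<in> ext R C' A) \<and>
     (\<forall>C A d. C \<in> obj R \<longrightarrow> A \<in> obj R \<longrightarrow> d \<in> ext R C A \<longrightarrow>
        push R (idm R A) d = d \<and> pull R (idm R C) d = d) \<and>
     (\<forall>C A A' A'' a a' d. a \<in> hom R A A' \<longrightarrow> a' \<in> hom R A' A'' \<longrightarrow> d \<in> ext R C A \<longrightarrow>
        push R (cmp R a' a) d = push R a' (push R a d)) \<and>
     (\<forall>C C' C'' A c c' d. c \<in> hom R C' C \<longrightarrow> c' \<in> hom R C'' C' \<longrightarrow> d \<in> ext R C A \<longrightarrow>
        pull R (cmp R c c') d = pull R c' (pull R c d)) \<and>
     (\<forall>C C' A A' a c d. a \<in> hom R A A' \<longrightarrow> c \<in> hom R C' C \<longrightarrow> d \<in> ext R C A \<longrightarrow>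
        pull R c (push R a d) = push R a (pull R c d)) \<and>
     (\<forall>C A A' a a' d d'. a \<in> hom R A A' \<longrightarrow> a' \<in> hom R A A' \<longrightarrow> d \<in> ext R C A \<longrightarrow> d' \<in> ext R C A \<longrightarrow>
        push R a (eadd R d d') = eadd R (push R a d) (push R a d') \<and>
        push R (madd R a a') d = eadd R (push R a d) (push R a' d)) \<and>
     (\<forall>C C' A c c' d d'. c \<in> hom R C' C \<longrightarrow> c' \<in> hom R C' C \<longrightarrow> d \<in> ext R C A \<longrightarrow> d' \<in> ext R C A \<longrightarrow>
        pull R c (eadd R d d') = eadd R (pull R c d) (pull R c d') \<and>
        pull R (madd R c c') d = eadd R (pull R c d) (pull R c' d))"

definition seq_equiv :: "('o,'m,'e,'z) ext_cat_data_scheme \<Rightarrow> 'o \<Rightarrow> 'o \<Rightarrow> 'm \<Rightarrow> 'm \<Rightarrow> 'm \<Rightarrow> 'm \<Rightarrow> bool" where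
  "seq_equiv R A C x y x' y' \<longleftrightarrow>
     (\<exists>B B' b b'. x \<in> hom R A B \<and> y \<in> hom R B C \<and> x' \<in> hom R A B' \<and> y' \<in> hom R B' C \<and>
        b \<in> hom R B B' \<and> b' \<in> hom R B' B \<and> cmp R b' b = idm R B \<and> cmp R b b' = idm R B' \<and>
        cmp R b x = x' \<and> cmp R y' b = y)"

definition is_realization :: "('o,'m,'e,'z) ext_cat_data_scheme \<Rightarrow> bool" where
  "is_realization R \<longleftrightarrow>
     (\<forall>C\<in>obj R. \<forall>A\<in>obj R. \<forall>d\<in>ext R C A.
        (\<exists>B x y. x \<in> hom R A B \<and> y \<in> hom R B C \<and> realizes R d x y) \<and>
        (\<forall>x y. realizes R d x y \<longrightarrow> (\<exists>B. x \<in> hom R A B \<and> y \<in> hom R B C)) \<and>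
        (\<forall>x y x' y'. realizes R d x y \<longrightarrow> (realizes R d x' y' \<longleftrightarrow> seq_equiv R A C x y x' y'))) \<and>
     (\<forall>C A C' A' d d' a c x y x' y'.
        d \<in> ext R C A \<longrightarrow> d' \<in> ext R C' A' \<longrightarrow> a \<in> hom R A A' \<longrightarrow> c \<in> hom R C C' \<longrightarrow>
        push R a d = pull R c d' \<longrightarrow> realizes R d x y \<longrightarrow> realizes R d' x' y' \<longrightarrow>
        (\<exists>b\<in>hom R (tgt R x) (tgt R x'). cmp R b x = cmp R x' a \<and> cmp R c y = cmp R y' b))"

text \<open>(ET2): the realization is additive.  The direct sum of d in E(C,A) and d' in E(C',A')
  is the element iA_star pC^star d + iA'_star pC'^star d' of E(C+C', A+A').\<close>
definition ET2 :: "('o,'m,'e,'z) ext_cat_data_scheme \<Rightarrow> bool" where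
  "ET2 R \<longleftrightarrow>
     (\<forall>A\<in>obj R. \<forall>C\<in>obj R. \<forall>P i1 i2 p1 p2. is_biproduct R A C P i1 i2 p1 p2 \<longrightarrow>
        realizes R (ezero R C A) i1 p2) \<and>
     (\<forall>A B C A' B' C' d d' x y x' y' PA iA iA' pA pA' PB iB iB' pB pB' PC iC iC' pC pC'.
        d \<in> ext R C A \<longrightarrow> d' \<in> ext R C' A' \<longrightarrow>
        x \<in> hom R A B \<longrightarrow> y \<in> hom R B C \<longrightarrow> x' \<in> hom R A' B' \<longrightarrow> y' \<in> hom R B' C' \<longrightarrow>
        realizes R d x y \<longrightarrow> realizes R d' x' y' \<longrightarrow>
        is_biproduct R A A' PA iA iA' pA pA' \<longrightarrow>
        is_biproduct R B B' PB iB iB' pB pB' \<longrightarrow>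
        is_biproduct R C C' PC iC iC' pC pC' \<longrightarrow>
        realizes R (eadd R (push R iA (pull R pC d)) (push R iA' (pull R pC' d')))
          (madd R (cmp R iB (cmp R x pA)) (cmp R iB' (cmp R x' pA')))
          (madd R (cmp R iC (cmp R y pB)) (cmp R iC' (cmp R y' pB'))))"

definition ET3 :: "('o,'m,'e,'z) ext_cat_data_scheme \<Rightarrow> bool" where
  "ET3 R \<longleftrightarrow>
     (\<forall>A B C A' B' C' d d' x y x' y' a b.
        d \<in> ext R C A \<longrightarrow> d' \<in> ext R C' A' \<longrightarrow>
        x \<in> hom R A B \<longrightarrow> y \<in> hom R B C \<longrightarrow> x' \<in> hom R A' B' \<longrightarrow> y' \<in> hom R B' C' \<longrightarrow>
        realizes R d x y \<longrightarrow> realizes R d' x' y' \<longrightarrow>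
        a \<in> hom R A A' \<longrightarrow> b \<in> hom R B B' \<longrightarrow> cmp R x' a = cmp R b x \<longrightarrow>
        (\<exists>c\<in>hom R C C'. cmp R c y = cmp R y' b \<and> push R a d = pull R c d'))"

definition ET3op :: "('o,'m,'e,'z) ext_cat_data_scheme \<Rightarrow> bool" where
  "ET3op R \<longleftrightarrow>
     (\<forall>A B C A' B' C' d d' x y x' y' b c.
        d \<in> ext R C A \<longrightarrow> d' \<in> ext R C' A' \<longrightarrow>
        x \<in> hom R A B \<longrightarrow> y \<in> hom R B C \<longrightarrow> x' \<in> hom R A' B' \<longrightarrow> y' \<in> hom R B' C' \<longrightarrow>
        realizes R d x y \<longrightarrow> realizes R d' x' y' \<longrightarrow>
        b \<in> hom R B B' \<longrightarrow> c \<in> hom R C C' \<longrightarrow> cmp R c y = cmp R y' b \<longrightarrow>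
        (\<exists>a\<in>hom R A A'. cmp R x' a = cmp R b x \<and> push R a d = pull R c d'))"

definition ET4 :: "('o,'m,'e,'z) ext_cat_data_scheme \<Rightarrow> bool" where
  "ET4 R \<longleftrightarrow>
     (\<forall>A B C D F d d' f f' g g'.
        d \<in> ext R D A \<longrightarrow> d' \<in> ext R F B \<longrightarrow>
        f \<in> hom R A B \<longrightarrow> f' \<in> hom R B D \<longrightarrow> g \<in> hom R B C \<longrightarrow> g' \<in> hom R C F \<longrightarrow>
        realizes R d f f' \<longrightarrow> realizes R d' g g' \<longrightarrow>
        (\<exists>E h h' dd e d''. E \<in> obj R \<and> h \<in> hom R A C \<and> h' \<in> hom R C E \<and>
           dd \<in> hom R D E \<and> e \<in> hom R E F \<and> d'' \<in> ext R E A \<and>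
           h = cmp R g f \<and> cmp R dd f' = cmp R h' g \<and> cmp R e h' = g' \<and>
           realizes R d'' h h' \<and>
           realizes R (push R f' d') dd e \<and>
           pull R dd d'' = d \<and>
           push R f d'' = pull R e d'))"

definition ET4op :: "('o,'m,'e,'z) ext_cat_data_scheme \<Rightarrow> bool" where
  "ET4op R \<longleftrightarrow>
     (\<forall>A B C D F d d' f f' g g'.
        d \<in> ext R B D \<longrightarrow> d' \<in> ext R C F \<longrightarrow>
        f' \<in> hom R D A \<longrightarrow> f \<in> hom R A B \<longrightarrow> g' \<in> hom R F B \<longrightarrow> g \<in> hom R B C \<longrightarrow>
        realizes R d f' f \<longrightarrow> realizes R d' g' g \<longrightarrow>
        (\<exists>E h h' dd e d''. E \<in> obj R \<and> dd \<in> hom R D E \<and> e \<in> hom R E F \<and>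
           h' \<in> hom R E A \<and> h \<in> hom R A C \<and> d'' \<in> ext R C E \<and>
           h = cmp R g f \<and> cmp R h' dd = f' \<and> cmp R f h' = cmp R g' e \<and>
           realizes R d'' h' h \<and>
           realizes R (pull R g' d) dd e \<and>
           push R e d'' = d' \<and>
           push R dd d = pull R g d''))"

definition extriangulated :: "('o,'m,'e,'z) ext_cat_data_scheme \<Rightarrow> bool" where
  "extriangulated R \<longleftrightarrow> is_additive R \<and> ET1 R \<and> is_realization R \<and> ET2 R \<and>
     ET3 R \<and> ET3op R \<and> ET4 R \<and> ET4op R"

definition E_triangle :: "('o,'m,'e,'z) ext_cat_data_scheme \<Rightarrow> 'o \<Rightarrow> 'o \<Rightarrow> 'o \<Rightarrow> 'm \<Rightarrow> 'm \<Rightarrow> 'e \<Rightarrow> bool" where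
  "E_triangle R A B C x y d \<longleftrightarrow>
     d \<in> ext R C A \<and> x \<in> hom R A B \<and> y \<in> hom R B C \<and> realizes R d x y"

definition enough_injective_objects :: "('o,'m,'e,'z) ext_cat_data_scheme \<Rightarrow> bool" where
  "enough_injective_objects R \<longleftrightarrow>
     (\<forall>A\<in>obj R. \<exists>E C x y d. E_triangle R A E C x y d \<and> (\<forall>X\<in>obj R. ext R X E = {ezero R X E}))"

definition enough_projective_morphisms :: "('o,'m,'e,'z) ext_cat_data_scheme \<Rightarrow> bool" where
  "enough_projective_morphisms R \<longleftrightarrow>
     (\<forall>C\<in>obj R. \<exists>K P k p g. E_triangle R K P C k p g \<and>
        (\<forall>A\<in>obj R. \<forall>d\<in>ext R C A. pull R p d = ezero R P A))"

text \<open>An additive subfunctor F of E is given by the set of its elements;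
  F(C,A) = ext R C A \<inter> F.\<close>
definition additive_subfunctor :: "('o,'m,'e,'z) ext_cat_data_scheme \<Rightarrow> 'e set \<Rightarrow> bool" where
  "additive_subfunctor R F \<longleftrightarrow> F \<subseteq> eel R \<and>
     (\<forall>C\<in>obj R. \<forall>A\<in>obj R. ezero R C A \<in> F \<and>
        (\<forall>d\<in>ext R C A \<inter> F. \<forall>d'\<in>ext R C A \<inter> F. eadd R d d' \<in> F) \<and>
        (\<forall>d\<in>ext R C A \<inter> F. eneg R d \<in> F)) \<and>
     (\<forall>C A A' a d. a \<in> hom R A A' \<longrightarrow> d \<in> ext R C A \<inter> F \<longrightarrow> push R a d \<in> F) \<and>
     (\<forall>C C' A c d. c \<in> hom R C' C \<longrightarrow> d \<in> ext R C A \<inter> F \<longrightarrow> pull R c d \<in> F)"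

definition Ph :: "('o,'m,'e,'z) ext_cat_data_scheme \<Rightarrow> 'e set \<Rightarrow> 'm set" where
  "Ph R F = {phi \<in> mor R. \<forall>A\<in>obj R. \<forall>d\<in>ext R (tgt R phi) A. pull R phi d \<in> F}"

definition F_inj :: "('o,'m,'e,'z) ext_cat_data_scheme \<Rightarrow> 'e set \<Rightarrow> 'm set" where
  "F_inj R F = {i \<in> mor R. \<forall>C\<in>obj R. \<forall>d\<in>ext R C (src R i) \<inter> F. push R i d = ezero R C (tgt R i)}"

definition ideal_star :: "('o,'m,'e,'z) ext_cat_data_scheme \<Rightarrow> 'm set \<Rightarrow> 'o \<Rightarrow> 'o \<Rightarrow> 'e set" where
  "ideal_star R I X A = {pull R i d | i d C. C \<in> obj R \<and> i \<in> I \<and> i \<in> hom R X C \<and> d \<in> ext R C A}"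

definition perpE :: "('o,'m,'e,'z) ext_cat_data_scheme \<Rightarrow> 'm set \<Rightarrow> 'm set" where
  "perpE R I = {g \<in> mor R. \<forall>m\<in>I. \<forall>d\<in>ext R (tgt R m) (src R g).
      pull R m (push R g d) = ezero R (src R m) (tgt R g)}"

definition enough_injective_morphisms :: "('o,'m,'e,'z) ext_cat_data_scheme \<Rightarrow> 'e set \<Rightarrow> bool" where
  "enough_injective_morphisms R F \<longleftrightarrow>
     (\<forall>A\<in>obj R. \<exists>B C e y d. E_triangle R A B C e y d \<and> d \<in> F \<and> e \<in> F_inj R F)"

definition enough_special_injective_morphisms :: "('o,'m,'e,'z) ext_cat_data_scheme \<Rightarrow> 'e set \<Rightarrow> bool" where
  "enough_special_injective_morphisms R F \<longleftrightarrow>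
     (\<forall>A\<in>obj R. \<exists>B C e y d. E_triangle R A B C e y d \<and> d \<in> F \<and> e \<in> F_inj R F \<and>
        (\<exists>B' C' x' y' d' b phi. E_triangle R A B' C' x' y' d' \<and>
           b \<in> hom R B B' \<and> phi \<in> hom R C C' \<and> phi \<in> Ph R F \<and>
           cmp R b e = cmp R x' (idm R A) \<and> cmp R phi y = cmp R y' b \<and>
           push R (idm R A) d = pull R phi d'))"

end

theory Submission
  imports Defs
begin

text \<open>
  An \<open>F\<close>-extension \<eta> of \<open>A\<close> dies under the \<open>F\<close>-injective inflation \<open>e\<close> of an
  \<open>E\<close>-triangle \<delta>, so by exactness \<open>\<eta> = c\<^sup>\<star>\<delta>\<close>; if moreover \<open>\<delta> = \<phi>\<^sup>\<star>\<delta>'\<close> with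
  \<phi> phantom, then \<open>\<eta> = (\<phi> c)\<^sup>\<star>\<delta>' \<in> Ph(F)\<^sup>\<star>\<close>.  This is (1)\<Rightarrow>(2); conversely,
  writing \<delta> as \<open>\<phi>\<^sup>\<star>\<delta>'\<close> and realizing \<open>\<delta>'\<close> gives (1), and (2)\<Rightarrow>(3) is a direct
  computation.  For (3)\<Rightarrow>(2) one needs, for each \<open>A\<close>, an \<open>F\<close>-injective inflation whose
  extension is a phantom pullback.  Pushing the triangle of a projective morphism
  \<open>P \<rightarrow> C\<close> along an \<open>F\<close>-injective morphism yields a deflation \<open>q\<close> that is a
  \<open>Ph(F)\<close>-precover of \<open>C\<close>; pulling back an injective-object triangle \<open>A \<rightarrow> I \<rightarrow> C\<close>
  along \<open>q\<close> gives an inflation of \<open>A\<close> lying in \<open>Ph(F)\<^sup>\<perp>\<close>, which is \<open>F\<close>-injective by (3).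
\<close>

locale extriangulated_cat =
  fixes R :: "('o,'m,'e,'z) ext_cat_data_scheme"
  assumes extriangulated: "extriangulated R"
begin

lemma is_category: "is_category R"
  using extriangulated unfolding extriangulated_def is_additive_def is_preadditive_def by blast

lemma ET1: "ET1 R" and realization: "is_realization R" and ET2: "ET2 R"
  and ET3: "ET3 R" and ET3op: "ET3op R"
  using extriangulated unfolding extriangulated_def by blast+

lemma hom_objs: "f \<in> hom R X Y \<Longrightarrow> X \<in> obj R \<and> Y \<in> obj R"
  using is_category unfolding is_category_def hom_def by blast

lemma homD: "f \<in> hom R X Y \<Longrightarrow> f \<in> mor R \<and> src R f = X \<and> tgt R f = Y"
  unfolding hom_def by blast

lemma mor_in_hom: "f \<in> mor R \<Longrightarrow> f \<in> hom R (src R f) (tgt R f)"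
  unfolding hom_def by blast

lemma id_hom: "X \<in> obj R \<Longrightarrow> idm R X \<in> hom R X X"
  using is_category unfolding is_category_def by blast

lemma comp_hom: "f \<in> hom R X Y \<Longrightarrow> g \<in> hom R Y Z \<Longrightarrow> cmp R g f \<in> hom R X Z"
  using is_category unfolding is_category_def by blast

lemma comp_id_left: "f \<in> hom R X Y \<Longrightarrow> cmp R (idm R Y) f = f"
  using is_category unfolding is_category_def by blast

lemma comp_id_right: "f \<in> hom R X Y \<Longrightarrow> cmp R f (idm R X) = f"
  using is_category unfolding is_category_def by blast

lemma comp_assoc:
  "f \<in> hom R W X \<Longrightarrow> g \<in> hom R X Y \<Longrightarrow> h \<in> hom R Y Z \<Longrightarrow>
   cmp R h (cmp R g f) = cmp R (cmp R h g) f"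
  using is_category unfolding is_category_def by blast

lemma biproduct_exists:
  "A \<in> obj R \<Longrightarrow> B \<in> obj R \<Longrightarrow> \<exists>P i1 i2 p1 p2. is_biproduct R A B P i1 i2 p1 p2"
  using extriangulated unfolding extriangulated_def is_additive_def by blast

lemma biproductD:
  "is_biproduct R A B P i1 i2 p1 p2 \<Longrightarrow>
   i1 \<in> hom R A P \<and> i2 \<in> hom R B P \<and> p1 \<in> hom R P A \<and> p2 \<in> hom R P B \<and>
   cmp R p1 i1 = idm R A \<and> cmp R p2 i2 = idm R B"
  unfolding is_biproduct_def by blast

subsection \<open>The bifunctor \<open>E\<close>\<close>

lemma ext_group:
  assumes "C \<in> obj R" "A \<in> obj R" "d \<in> ext R C A"
  shows "eneg R d \<in> ext R C A" "eadd R d (ezero R C A) = d" "eadd R d (eneg R d) = ezero R C A"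
  using ET1 assms unfolding ET1_def by meson+

lemma ext_add_assoc:
  assumes "C \<in> obj R" "A \<in> obj R" "d \<in> ext R C A" "d' \<in> ext R C A" "d'' \<in> ext R C A"
  shows "eadd R (eadd R d d') d'' = eadd R d (eadd R d' d'')"
  using ET1 assms unfolding ET1_def by meson

lemma ezero_ext: "C \<in> obj R \<Longrightarrow> A \<in> obj R \<Longrightarrow> ezero R C A \<in> ext R C A"
  using ET1 unfolding ET1_def by meson

lemma push_ext: "a \<in> hom R A A' \<Longrightarrow> d \<in> ext R C A \<Longrightarrow> push R a d \<in> ext R C A'"
  using ET1 unfolding ET1_def by meson

lemma pull_ext: "c \<in> hom R C' C \<Longrightarrow> d \<in> ext R C A \<Longrightarrow> pull R c d \<in> ext R C' A"
  using ET1 unfolding ET1_def by meson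

lemma push_id: "C \<in> obj R \<Longrightarrow> A \<in> obj R \<Longrightarrow> d \<in> ext R C A \<Longrightarrow> push R (idm R A) d = d"
  using ET1 unfolding ET1_def by meson

lemma pull_id: "C \<in> obj R \<Longrightarrow> A \<in> obj R \<Longrightarrow> d \<in> ext R C A \<Longrightarrow> pull R (idm R C) d = d"
  using ET1 unfolding ET1_def by meson

lemma pull_comp:
  "c \<in> hom R C' C \<Longrightarrow> c' \<in> hom R C'' C' \<Longrightarrow> d \<in> ext R C A \<Longrightarrow>
   pull R (cmp R c c') d = pull R c' (pull R c d)"
  using ET1 unfolding ET1_def by meson

lemma pull_push:
  "a \<in> hom R A A' \<Longrightarrow> c \<in> hom R C' C \<Longrightarrow> d \<in> ext R C A \<Longrightarrow>
   pull R c (push R a d) = push R a (pull R c d)"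
  using ET1 unfolding ET1_def by meson

lemma push_add:
  "a \<in> hom R A A' \<Longrightarrow> d \<in> ext R C A \<Longrightarrow> d' \<in> ext R C A \<Longrightarrow>
   push R a (eadd R d d') = eadd R (push R a d) (push R a d')"
  using ET1 unfolding ET1_def by meson

lemma pull_add:
  "c \<in> hom R C' C \<Longrightarrow> d \<in> ext R C A \<Longrightarrow> d' \<in> ext R C A \<Longrightarrow>
   pull R c (eadd R d d') = eadd R (pull R c d) (pull R c d')"
  using ET1 unfolding ET1_def by meson

lemma ext_idem_eq_zero:
  assumes "C \<in> obj R" "A \<in> obj R" "u \<in> ext R C A" "eadd R u u = u"
  shows "u = ezero R C A"
proof -
  note g = ext_group[OF assms(1-3)]
  have "u = eadd R u (eadd R u (eneg R u))" using g by simp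
  also have "\<dots> = eadd R (eadd R u u) (eneg R u)" using ext_add_assoc[OF assms(1-3) assms(3) g(1)] by simp
  also have "\<dots> = ezero R C A" using g assms(4) by simp
  finally show ?thesis .
qed

lemma push_ezero:
  assumes "a \<in> hom R A A'" "C \<in> obj R"
  shows "push R a (ezero R C A) = ezero R C A'"
proof -
  have o: "A \<in> obj R" "A' \<in> obj R" using hom_objs assms by blast+
  note z = ezero_ext[OF assms(2) o(1)] ext_group(2)[OF assms(2) o(1) ezero_ext[OF assms(2) o(1)]]
  show ?thesis
    using ext_idem_eq_zero[OF assms(2) o(2) push_ext[OF assms(1) z(1)]] push_add[OF assms(1) z(1) z(1)] z(2)
    by simp
qed

lemma pull_ezero:
  assumes "c \<in> hom R C' C" "A \<in> obj R"
  shows "pull R c (ezero R C A) = ezero R C' A"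
proof -
  have o: "C' \<in> obj R" "C \<in> obj R" using hom_objs assms by blast+
  note z = ezero_ext[OF o(2) assms(2)] ext_group(2)[OF o(2) assms(2) ezero_ext[OF o(2) assms(2)]]
  show ?thesis
    using ext_idem_eq_zero[OF o(1) assms(2) pull_ext[OF assms(1) z(1)]] pull_add[OF assms(1) z(1) z(1)] z(2)
    by simp
qed

subsection \<open>\<open>E\<close>-triangles\<close>

lemma E_triangleD:
  "E_triangle R A B C x y d \<Longrightarrow>
   d \<in> ext R C A \<and> x \<in> hom R A B \<and> y \<in> hom R B C \<and> realizes R d x y \<and>
   A \<in> obj R \<and> B \<in> obj R \<and> C \<in> obj R"
  unfolding E_triangle_def using hom_objs by blast

lemma E_triangle_exists:
  assumes "C \<in> obj R" "A \<in> obj R" "d \<in> ext R C A"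
  shows "\<exists>B x y. E_triangle R A B C x y d"
proof -
  obtain B x y where "x \<in> hom R A B" "y \<in> hom R B C" "realizes R d x y"
    using conjunct1[OF realization[unfolded is_realization_def], rule_format, OF assms] by blast
  then show ?thesis using assms(3) unfolding E_triangle_def by blast
qed

lemma biproduct_E_triangle:
  assumes "is_biproduct R A C P i1 i2 p1 p2"
  shows "E_triangle R A P C i1 p2 (ezero R C A)"
proof -
  have h: "i1 \<in> hom R A P" "p2 \<in> hom R P C" using biproductD[OF assms] by blast+
  have o: "A \<in> obj R" "C \<in> obj R" using hom_objs h by blast+
  have "realizes R (ezero R C A) i1 p2"
    using conjunct1[OF ET2[unfolded ET2_def], rule_format, OF o assms] .
  then show ?thesis unfolding E_triangle_def using h ezero_ext o by blast
qed

lemma E_triangle_morphism: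
  assumes "E_triangle R A B C x y d" "E_triangle R A' B' C' x' y' d'"
    "a \<in> hom R A A'" "c \<in> hom R C C'" "push R a d = pull R c d'"
  shows "\<exists>b\<in>hom R B B'. cmp R b x = cmp R x' a \<and> cmp R c y = cmp R y' b"
proof -
  have t: "d \<in> ext R C A" "d' \<in> ext R C' A'" "realizes R d x y" "realizes R d' x' y'"
    "tgt R x = B" "tgt R x' = B'"
    using assms(1,2) unfolding E_triangle_def hom_def by blast+
  show ?thesis
    using conjunct2[OF realization[unfolded is_realization_def], rule_format, OF t(1,2) assms(3-5) t(3,4)] t(5,6)
    by simp
qed

lemma ET3_rule:
  assumes "E_triangle R A B C x y d" "E_triangle R A' B' C' x' y' d'"
    "a \<in> hom R A A'" "b \<in> hom R B B'" "cmp R x' a = cmp R b x"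
  shows "\<exists>c\<in>hom R C C'. cmp R c y = cmp R y' b \<and> push R a d = pull R c d'"
  using assms(1,2) unfolding E_triangle_def
  by (blast intro: ET3[unfolded ET3_def, rule_format, OF _ _ _ _ _ _ _ _ assms(3-5)])

lemma ET3op_rule:
  assumes "E_triangle R A B C x y d" "E_triangle R A' B' C' x' y' d'"
    "b \<in> hom R B B'" "c \<in> hom R C C'" "cmp R c y = cmp R y' b"
  shows "\<exists>a\<in>hom R A A'. cmp R x' a = cmp R b x \<and> push R a d = pull R c d'"
  using assms(1,2) unfolding E_triangle_def
  by (blast intro: ET3op[unfolded ET3op_def, rule_format, OF _ _ _ _ _ _ _ _ assms(3-5)])

lemma pull_deflation_eq_zero:
  assumes "E_triangle R A B C x y d"
  shows "pull R y d = ezero R B A"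
proof -
  note t = E_triangleD[OF assms]
  obtain P i1 i2 p1 p2 where bp: "is_biproduct R A B P i1 i2 p1 p2"
    using biproduct_exists t by blast
  obtain a where "a \<in> hom R A A" "push R a (ezero R B A) = pull R y d"
    using ET3op_rule[OF biproduct_E_triangle[OF bp] assms] biproductD[OF bp] t by blast
  then show ?thesis using push_ezero t by metis
qed

lemma push_inflation_eq_zero:
  assumes "E_triangle R A B C x y d"
  shows "push R x d = ezero R C B"
proof -
  note t = E_triangleD[OF assms]
  obtain P i1 i2 p1 p2 where bp: "is_biproduct R B C P i1 i2 p1 p2"
    using biproduct_exists t by blast
  obtain c where "c \<in> hom R C C" "push R x d = pull R c (ezero R C B)"
    using ET3_rule[OF assms biproduct_E_triangle[OF bp]] biproductD[OF bp] t by blast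
  then show ?thesis using pull_ezero t by metis
qed

text \<open>The next three lemmas express exactness of the long sequences of \<open>E\<close>-groups and
  of Hom attached to an \<open>E\<close>-triangle.  Each vanishing hypothesis says that a pair of maps is a
  morphism into or out of a split triangle; composing its middle term with a biproduct
  projection or injection gives a morphism of \<open>E\<close>-triangles, completed by (ET3) or
  (ET3)\<open>\<^sup>o\<^sup>p\<close>.\<close>

lemma ext_eq_pull_if_push_inflation_zero:
  assumes "E_triangle R A B C x y d" "\<eta> \<in> ext R X A" "X \<in> obj R" "push R x \<eta> = ezero R X B"
  shows "\<exists>c\<in>hom R X C. \<eta> = pull R c d"
proof -
  note t = E_triangleD[OF assms(1)]
  obtain M m n where \<eta>t: "E_triangle R A M X m n \<eta>"
    using E_triangle_exists assms(2,3) t by blast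
  have m: "m \<in> hom R A M" using E_triangleD[OF \<eta>t] by blast
  obtain P i1 i2 p1 p2 where bp: "is_biproduct R B X P i1 i2 p1 p2"
    using biproduct_exists t assms(3) by blast
  have h: "i1 \<in> hom R B P" "p1 \<in> hom R P B" "cmp R p1 i1 = idm R B" using biproductD[OF bp] by blast+
  have "push R x \<eta> = pull R (idm R X) (ezero R X B)"
    using assms(3,4) pull_id ezero_ext t by metis
  then obtain b where b: "b \<in> hom R M P" "cmp R b m = cmp R i1 x"
    using E_triangle_morphism[OF \<eta>t biproduct_E_triangle[OF bp]] t id_hom assms(3) by blast
  have b': "cmp R p1 b \<in> hom R M B" using comp_hom b(1) h(2) by blast
  have "cmp R (cmp R p1 b) m = cmp R p1 (cmp R i1 x)" using comp_assoc[OF m b(1) h(2)] b(2) by simp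
  also have "\<dots> = cmp R x (idm R A)" using comp_assoc[OF _ h(1,2)] h(3) comp_id_left comp_id_right t by metis
  finally obtain c where "c \<in> hom R X C" "push R (idm R A) \<eta> = pull R c d"
    using ET3_rule[OF \<eta>t assms(1) id_hom b'] t by metis
  then show ?thesis using push_id assms(2,3) t by metis
qed

lemma ext_eq_push_if_pull_deflation_zero:
  assumes "E_triangle R K P C k p \<gamma>" "\<theta> \<in> ext R C Z" "Z \<in> obj R" "pull R p \<theta> = ezero R P Z"
  shows "\<exists>a\<in>hom R K Z. \<theta> = push R a \<gamma>"
proof -
  note t = E_triangleD[OF assms(1)]
  obtain N m n where \<theta>t: "E_triangle R Z N C m n \<theta>"
    using E_triangle_exists assms(2,3) t by blast
  have n: "n \<in> hom R N C" using E_triangleD[OF \<theta>t] by blast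
  obtain Q i1 i2 p1 p2 where bp: "is_biproduct R Z P Q i1 i2 p1 p2"
    using biproduct_exists t assms(3) by blast
  have h: "i2 \<in> hom R P Q" "p2 \<in> hom R Q P" "cmp R p2 i2 = idm R P" using biproductD[OF bp] by blast+
  have "push R (idm R Z) (ezero R P Z) = pull R p \<theta>"
    using assms(3,4) push_id ezero_ext t by metis
  then obtain b where b: "b \<in> hom R Q N" "cmp R p p2 = cmp R n b"
    using E_triangle_morphism[OF biproduct_E_triangle[OF bp] \<theta>t] t id_hom assms(3) by blast
  have b': "cmp R b i2 \<in> hom R P N" using comp_hom b(1) h(1) by blast
  have "cmp R n (cmp R b i2) = cmp R (cmp R p p2) i2" using comp_assoc[OF h(1) b(1) n] b(2) by simp
  also have "\<dots> = cmp R (idm R C) p" using comp_assoc[OF h(1,2)] h(3) comp_id_left comp_id_right t by metis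
  finally obtain a where "a \<in> hom R K Z" "push R a \<gamma> = pull R (idm R C) \<theta>"
    using ET3op_rule[OF assms(1) \<theta>t b' id_hom] t by metis
  then show ?thesis using pull_id assms(2,3) t by metis
qed

lemma factors_through_deflation_if_pull_zero:
  assumes "E_triangle R A M C u q \<zeta>" "f \<in> hom R X C" "pull R f \<zeta> = ezero R X A"
  shows "\<exists>t\<in>hom R X M. cmp R q t = f"
proof -
  note t = E_triangleD[OF assms(1)]
  have X: "X \<in> obj R" using hom_objs assms(2) by blast
  obtain P i1 i2 p1 p2 where bp: "is_biproduct R A X P i1 i2 p1 p2"
    using biproduct_exists t X by blast
  have h: "i2 \<in> hom R X P" "p2 \<in> hom R P X" "cmp R p2 i2 = idm R X" using biproductD[OF bp] by blast+
  have "push R (idm R A) (ezero R X A) = pull R f \<zeta>"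
    using assms(3) push_id ezero_ext t X by metis
  then obtain b where b: "b \<in> hom R P M" "cmp R f p2 = cmp R q b"
    using E_triangle_morphism[OF biproduct_E_triangle[OF bp] assms(1)] t id_hom assms(2) by blast
  have "cmp R q (cmp R b i2) = cmp R (cmp R f p2) i2" using comp_assoc[OF h(1) b(1)] b(2) t by metis
  also have "\<dots> = f" using comp_assoc[OF h(1,2) assms(2)] h(3) comp_id_right assms(2) by metis
  finally show ?thesis using comp_hom b(1) h(1) by blast
qed

end

subsection \<open>Phantom morphisms\<close>

definition Ph_precover :: "('o,'m,'e,'z) ext_cat_data_scheme \<Rightarrow> 'e set \<Rightarrow> 'o \<Rightarrow> 'm \<Rightarrow> bool" where
  "Ph_precover R F C q \<longleftrightarrow> q \<in> Ph R F \<and> tgt R q = C \<and>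
     (\<forall>X \<phi>. \<phi> \<in> hom R X C \<longrightarrow> \<phi> \<in> Ph R F \<longrightarrow> (\<exists>t\<in>hom R X (src R q). cmp R q t = \<phi>))"

locale extriangulated_subfunctor = extriangulated_cat +
  fixes F :: "'e set"
  assumes additive_subfunctor: "additive_subfunctor R F"
begin

lemma push_in_F: "a \<in> hom R A A' \<Longrightarrow> d \<in> ext R C A \<Longrightarrow> d \<in> F \<Longrightarrow> push R a d \<in> F"
  using additive_subfunctor unfolding additive_subfunctor_def by blast

lemma pull_in_F: "c \<in> hom R C' C \<Longrightarrow> d \<in> ext R C A \<Longrightarrow> d \<in> F \<Longrightarrow> pull R c d \<in> F"
  using additive_subfunctor unfolding additive_subfunctor_def by blast

lemma Ph_in_hom: "\<phi> \<in> Ph R F \<Longrightarrow> \<phi> \<in> hom R (src R \<phi>) (tgt R \<phi>)"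
  unfolding Ph_def hom_def by blast

lemma Ph_pull_in_F: "\<phi> \<in> Ph R F \<Longrightarrow> \<phi> \<in> hom R X C \<Longrightarrow> A \<in> obj R \<Longrightarrow> d \<in> ext R C A \<Longrightarrow> pull R \<phi> d \<in> F"
  unfolding Ph_def hom_def by blast

lemma PhI:
  "\<phi> \<in> hom R X C \<Longrightarrow> (\<And>A d. A \<in> obj R \<Longrightarrow> d \<in> ext R C A \<Longrightarrow> pull R \<phi> d \<in> F) \<Longrightarrow> \<phi> \<in> Ph R F"
  unfolding Ph_def hom_def by blast

lemma F_inj_push_eq_zero:
  "i \<in> F_inj R F \<Longrightarrow> i \<in> hom R A B \<Longrightarrow> C \<in> obj R \<Longrightarrow> d \<in> ext R C A \<Longrightarrow> d \<in> F \<Longrightarrow>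
   push R i d = ezero R C B"
  unfolding F_inj_def hom_def by blast

lemma Ph_comp_left:
  assumes "\<phi> \<in> Ph R F" "\<phi> \<in> hom R X Y" "c \<in> hom R Y Z"
  shows "cmp R c \<phi> \<in> Ph R F"
proof (rule PhI[OF comp_hom[OF assms(2,3)]])
  fix A d assume "A \<in> obj R" "d \<in> ext R Z A"
  then show "pull R (cmp R c \<phi>) d \<in> F"
    using pull_comp[OF assms(3,2)] Ph_pull_in_F[OF assms(1,2)] pull_ext[OF assms(3)] by simp
qed

lemma Ph_comp_right:
  assumes "\<phi> \<in> Ph R F" "\<phi> \<in> hom R Y Z" "t \<in> hom R X Y"
  shows "cmp R \<phi> t \<in> Ph R F"
proof (rule PhI[OF comp_hom[OF assms(3,2)]])
  fix A d assume "A \<in> obj R" "d \<in> ext R Z A"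
  then show "pull R (cmp R \<phi> t) d \<in> F"
    using pull_comp[OF assms(2,3)] pull_in_F[OF assms(3) pull_ext[OF assms(2)]] Ph_pull_in_F[OF assms(1,2)]
    by simp
qed

lemma ideal_star_Ph_subset: "A \<in> obj R \<Longrightarrow> ideal_star R (Ph R F) X A \<subseteq> ext R X A \<inter> F"
  unfolding ideal_star_def using pull_ext Ph_pull_in_F by blast

lemma pull_in_ideal_star:
  "C \<in> obj R \<Longrightarrow> \<phi> \<in> Ph R F \<Longrightarrow> \<phi> \<in> hom R X C \<Longrightarrow> d \<in> ext R C A \<Longrightarrow>
   pull R \<phi> d \<in> ideal_star R (Ph R F) X A"
  unfolding ideal_star_def by blast

lemma F_ext_in_ideal_star:
  assumes "E_triangle R A B C e y d" "e \<in> F_inj R F"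
    "\<phi> \<in> Ph R F" "\<phi> \<in> hom R C C'" "d' \<in> ext R C' A" "d = pull R \<phi> d'"
    "\<eta> \<in> ext R X A \<inter> F" "X \<in> obj R"
  shows "\<eta> \<in> ideal_star R (Ph R F) X A"
proof -
  note t = E_triangleD[OF assms(1)]
  have "push R e \<eta> = ezero R X B" using F_inj_push_eq_zero assms(2,7,8) t by blast
  then obtain c where c: "c \<in> hom R X C" "\<eta> = pull R c d"
    using ext_eq_pull_if_push_inflation_zero assms(1,7,8) by blast
  have "\<eta> = pull R (cmp R \<phi> c) d'" using c(2) assms(6) pull_comp[OF assms(4) c(1) assms(5)] by simp
  then show ?thesis
    using pull_in_ideal_star[OF _ Ph_comp_right[OF assms(3,4) c(1)] comp_hom[OF c(1) assms(4)] assms(5)]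
      hom_objs[OF assms(4)] by simp
qed

lemma F_inj_subset_perpE: "F_inj R F \<subseteq> perpE R (Ph R F)"
proof
  fix g assume g: "g \<in> F_inj R F"
  have gh: "g \<in> hom R (src R g) (tgt R g)" using g mor_in_hom unfolding F_inj_def by blast
  { fix m d assume m: "m \<in> Ph R F" and d: "d \<in> ext R (tgt R m) (src R g)"
    have mh: "m \<in> hom R (src R m) (tgt R m)" using Ph_in_hom m .
    have "pull R m (push R g d) = push R g (pull R m d)" using pull_push[OF gh mh d] .
    also have "\<dots> = ezero R (src R m) (tgt R g)"
      using F_inj_push_eq_zero[OF g gh _ pull_ext[OF mh d]] Ph_pull_in_F[OF m mh _ d] hom_objs mh gh
      by blast
    finally have "pull R m (push R g d) = ezero R (src R m) (tgt R g)" . }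
  then show "g \<in> perpE R (Ph R F)" using g unfolding perpE_def F_inj_def by blast
qed

lemma perpE_subset_F_inj:
  assumes "\<forall>X\<in>obj R. \<forall>A\<in>obj R. ext R X A \<inter> F = ideal_star R (Ph R F) X A"
  shows "perpE R (Ph R F) \<subseteq> F_inj R F"
proof
  fix g assume g: "g \<in> perpE R (Ph R F)"
  have gh: "g \<in> hom R (src R g) (tgt R g)" using g mor_in_hom unfolding perpE_def by blast
  { fix C \<eta> assume C: "C \<in> obj R" and \<eta>: "\<eta> \<in> ext R C (src R g) \<inter> F"
    then obtain m d C' where m: "m \<in> Ph R F" "m \<in> hom R C C'" "d \<in> ext R C' (src R g)" "\<eta> = pull R m d"
      using assms hom_objs[OF gh] unfolding ideal_star_def by blast
    have "push R g \<eta> = pull R m (push R g d)" using m pull_push[OF gh m(2,3)] by simp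
    also have "\<dots> = ezero R C (tgt R g)" using g m homD[OF m(2)] unfolding perpE_def by blast
    finally have "push R g \<eta> = ezero R C (tgt R g)" . }
  then show "g \<in> F_inj R F" using g unfolding F_inj_def perpE_def by blast
qed

lemma F_eq_Ph_star_if_enough_special_injective_morphisms:
  assumes "enough_special_injective_morphisms R F" "X \<in> obj R" "A \<in> obj R"
  shows "ext R X A \<inter> F = ideal_star R (Ph R F) X A"
proof
  obtain B C e y d where t: "E_triangle R A B C e y d" "e \<in> F_inj R F"
    and "\<exists>B' C' x' y' d' b \<phi>. E_triangle R A B' C' x' y' d' \<and> b \<in> hom R B B' \<and>
           \<phi> \<in> hom R C C' \<and> \<phi> \<in> Ph R F \<and> cmp R b e = cmp R x' (idm R A) \<and>
           cmp R \<phi> y = cmp R y' b \<and> push R (idm R A) d = pull R \<phi> d'"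
    using bspec[OF assms(1)[unfolded enough_special_injective_morphisms_def] assms(3)] by blast
  then obtain B' C' x' y' d' \<phi> where t': "E_triangle R A B' C' x' y' d'"
    and \<phi>: "\<phi> \<in> hom R C C'" "\<phi> \<in> Ph R F" "push R (idm R A) d = pull R \<phi> d'"
    by blast
  have "d = pull R \<phi> d'" using \<phi>(3) push_id E_triangleD[OF t(1)] by metis
  then show "ext R X A \<inter> F \<subseteq> ideal_star R (Ph R F) X A"
    using F_ext_in_ideal_star[OF t \<phi>(2,1)] E_triangleD[OF t'] assms(2) by blast
  show "ideal_star R (Ph R F) X A \<subseteq> ext R X A \<inter> F" using ideal_star_Ph_subset assms(3) .
qed

lemma enough_special_injective_morphisms_if_F_eq_Ph_star:
  assumes "\<forall>X\<in>obj R. \<forall>A\<in>obj R. ext R X A \<inter> F = ideal_star R (Ph R F) X A"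
    "enough_injective_morphisms R F"
  shows "enough_special_injective_morphisms R F"
  unfolding enough_special_injective_morphisms_def
proof
  fix A assume A: "A \<in> obj R"
  obtain B C e y d where t: "E_triangle R A B C e y d" "d \<in> F" "e \<in> F_inj R F"
    using assms(2) A unfolding enough_injective_morphisms_def by blast
  note t1 = E_triangleD[OF t(1)]
  obtain \<phi> d' C' where \<phi>: "C' \<in> obj R" "\<phi> \<in> Ph R F" "\<phi> \<in> hom R C C'" "d' \<in> ext R C' A"
    "d = pull R \<phi> d'"
    using assms(1) t(2) t1 A unfolding ideal_star_def by blast
  obtain B' x' y' where t': "E_triangle R A B' C' x' y' d'"
    using E_triangle_exists \<phi>(1,4) A by blast
  have push: "push R (idm R A) d = pull R \<phi> d'" using \<phi>(5) push_id t1 by metis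
  then obtain b where "b \<in> hom R B B'" "cmp R b e = cmp R x' (idm R A)" "cmp R \<phi> y = cmp R y' b"
    using E_triangle_morphism[OF t(1) t' id_hom[OF A] \<phi>(3)] by blast
  then show "\<exists>B C e y d. E_triangle R A B C e y d \<and> d \<in> F \<and> e \<in> F_inj R F \<and>
        (\<exists>B' C' x' y' d' b phi. E_triangle R A B' C' x' y' d' \<and>
           b \<in> hom R B B' \<and> phi \<in> hom R C C' \<and> phi \<in> Ph R F \<and>
           cmp R b e = cmp R x' (idm R A) \<and> cmp R phi y = cmp R y' b \<and>
           push R (idm R A) d = pull R phi d')"
    using t t' \<phi> push by blast
qed

lemma perpE_Ph_eq_F_inj_if_F_eq_Ph_star:
  assumes "\<forall>X\<in>obj R. \<forall>A\<in>obj R. ext R X A \<inter> F = ideal_star R (Ph R F) X A"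
  shows "perpE R (Ph R F) = F_inj R F"
  using perpE_subset_F_inj[OF assms] F_inj_subset_perpE by (rule subset_antisym)

text \<open>The precover is the deflation of \<open>f\<^sub>\<star>\<gamma>\<close>, where \<open>\<gamma>\<close> is the triangle of a
  projective morphism onto \<open>C\<close> and \<open>f\<close> an \<open>F\<close>-injective morphism out of its first term.\<close>

lemma Ph_precover_exists:
  assumes "enough_projective_morphisms R" "enough_injective_morphisms R F" "C \<in> obj R"
  shows "\<exists>q. Ph_precover R F C q"
proof -
  obtain K P k p \<gamma> where tp: "E_triangle R K P C k p \<gamma>"
    and proj: "\<forall>Z\<in>obj R. \<forall>\<theta>\<in>ext R C Z. pull R p \<theta> = ezero R P Z"
    using assms(1,3) unfolding enough_projective_morphisms_def by blast
  note tp1 = E_triangleD[OF tp]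
  obtain BK D f s \<epsilon> where tf: "E_triangle R K BK D f s \<epsilon>" "\<epsilon> \<in> F" "f \<in> F_inj R F"
    using assms(2) tp1 unfolding enough_injective_morphisms_def by blast
  note tf1 = E_triangleD[OF tf(1)]
  define \<zeta> where "\<zeta> = push R f \<gamma>"
  have \<zeta>: "\<zeta> \<in> ext R C BK" unfolding \<zeta>_def using push_ext tf1 tp1 by blast
  then obtain M u q where tq: "E_triangle R BK M C u q \<zeta>"
    using E_triangle_exists assms(3) tf1 by blast
  note tq1 = E_triangleD[OF tq]
  have pull_push_\<zeta>: "pull R c \<zeta> = push R f (pull R c \<gamma>)" if "c \<in> hom R X C" for X c
    unfolding \<zeta>_def using pull_push that tf1 tp1 by blast
  have "push R f (pull R q \<gamma>) = ezero R M BK"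
    using pull_push_\<zeta>[of q M] pull_deflation_eq_zero[OF tq] tq1 by simp
  then obtain c where "c \<in> hom R M D" "pull R q \<gamma> = pull R c \<epsilon>"
    using ext_eq_pull_if_push_inflation_zero[OF tf(1)] pull_ext tq1 tp1 by blast
  then have q\<gamma>: "pull R q \<gamma> \<in> F" using pull_in_F tf1 tf(2) by metis
  have "q \<in> Ph R F"
  proof (rule PhI[of q M C])
    fix Z \<theta> assume Z: "Z \<in> obj R" and \<theta>: "\<theta> \<in> ext R C Z"
    then obtain a where a: "a \<in> hom R K Z" "\<theta> = push R a \<gamma>"
      using ext_eq_push_if_pull_deflation_zero[OF tp] proj by blast
    then show "pull R q \<theta> \<in> F"
      using pull_push[OF a(1)] push_in_F[OF a(1) pull_ext] q\<gamma> tq1 tp1 by metis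
  qed (use tq1 in blast)
  moreover have "\<exists>t\<in>hom R X M. cmp R q t = \<phi>" if \<phi>: "\<phi> \<in> hom R X C" "\<phi> \<in> Ph R F" for X \<phi>
  proof -
    have X: "X \<in> obj R" using hom_objs \<phi>(1) by blast
    have "pull R \<phi> \<zeta> = ezero R X BK"
      using pull_push_\<zeta>[OF \<phi>(1)] F_inj_push_eq_zero[OF tf(3)] Ph_pull_in_F[OF \<phi>(2,1)] pull_ext[OF \<phi>(1)]
        X tf1 tp1 by metis
    then show ?thesis using factors_through_deflation_if_pull_zero[OF tq \<phi>(1)] by blast
  qed
  ultimately show ?thesis unfolding Ph_precover_def using tq1 homD by metis
qed

text \<open>Since \<open>I\<close> is injective, every extension of \<open>A\<close> is a pullback \<open>c\<^sup>\<star>\<delta>\<close>; restricted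
  along a phantom \<open>m\<close> it becomes a pullback of \<open>q\<^sup>\<star>\<delta>\<close>, which \<open>g\<close> kills.\<close>

lemma inflation_of_pullback_along_precover_in_perpE:
  assumes "E_triangle R A I C x y \<delta>" "\<forall>Z\<in>obj R. ext R Z I = {ezero R Z I}"
    "Ph_precover R F C q" "E_triangle R A B (src R q) g v (pull R q \<delta>)"
  shows "g \<in> perpE R (Ph R F)"
proof -
  note ti = E_triangleD[OF assms(1)] and tg = E_triangleD[OF assms(4)]
  have q: "q \<in> hom R (src R q) C" using assms(3) Ph_in_hom unfolding Ph_precover_def by blast
  have g: "src R g = A" "tgt R g = B" using homD tg by blast+
  { fix m d assume m: "m \<in> Ph R F" and d: "d \<in> ext R (tgt R m) A"
    have mh: "m \<in> hom R (src R m) (tgt R m)" using Ph_in_hom m .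
    have D: "tgt R m \<in> obj R" using hom_objs mh by blast
    have "push R x d = ezero R (tgt R m) I" using assms(2) push_ext ti d D by blast
    then obtain c where c: "c \<in> hom R (tgt R m) C" "d = pull R c \<delta>"
      using ext_eq_pull_if_push_inflation_zero[OF assms(1) d D] by blast
    obtain t where t: "t \<in> hom R (src R m) (src R q)" "cmp R q t = cmp R c m"
      using assms(3) Ph_comp_left[OF m mh c(1)] comp_hom[OF mh c(1)] unfolding Ph_precover_def by blast
    have "pull R m d = pull R t (pull R q \<delta>)"
      using c(2) t(2) pull_comp[OF c(1) mh] pull_comp[OF q t(1)] ti by metis
    then have "pull R m (push R g d) = pull R t (push R g (pull R q \<delta>))"
      using pull_push[OF _ mh d] pull_push[OF _ t(1) tg[THEN conjunct1]] tg by metis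
    also have "\<dots> = ezero R (src R m) (tgt R g)"
      using push_inflation_eq_zero[OF assms(4)] pull_ezero[OF t(1)] g tg by simp
    finally have "pull R m (push R g d) = ezero R (src R m) (tgt R g)" . }
  then show ?thesis unfolding perpE_def using g tg homD by blast
qed

lemma F_eq_Ph_star_if_perpE_Ph_eq_F_inj:
  assumes "perpE R (Ph R F) = F_inj R F"
    "enough_injective_objects R" "enough_projective_morphisms R" "enough_injective_morphisms R F"
    "X \<in> obj R" "A \<in> obj R"
  shows "ext R X A \<inter> F = ideal_star R (Ph R F) X A"
proof
  obtain I C x y \<delta> where ti: "E_triangle R A I C x y \<delta>" "\<forall>Z\<in>obj R. ext R Z I = {ezero R Z I}"
    using assms(2,6) unfolding enough_injective_objects_def by blast
  note ti1 = E_triangleD[OF ti(1)]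
  obtain q where q: "Ph_precover R F C q" using Ph_precover_exists assms(3,4) ti1 by blast
  have qh: "q \<in> hom R (src R q) C" "q \<in> Ph R F" using q Ph_in_hom unfolding Ph_precover_def by blast+
  obtain B g v where tg: "E_triangle R A B (src R q) g v (pull R q \<delta>)"
    using E_triangle_exists pull_ext[OF qh(1)] hom_objs[OF qh(1)] ti1 by blast
  have "g \<in> F_inj R F"
    using inflation_of_pullback_along_precover_in_perpE[OF ti q tg] assms(1) by blast
  then show "ext R X A \<inter> F \<subseteq> ideal_star R (Ph R F) X A"
    using F_ext_in_ideal_star[OF tg _ qh(2,1)] ti1 assms(5) by blast
  show "ideal_star R (Ph R F) X A \<subseteq> ext R X A \<inter> F" using ideal_star_Ph_subset assms(6) .
qed

end

theorem corollary4p7: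
  fixes R :: "('o,'m,'e) ext_cat_data" and F :: "'e set"
  assumes "extriangulated R"
    and "enough_injective_objects R"
    and "enough_projective_morphisms R"
    and "additive_subfunctor R F"
    and "enough_injective_morphisms R F"
  shows "(enough_special_injective_morphisms R F \<longleftrightarrow>
            (\<forall>X\<in>obj R. \<forall>A\<in>obj R. ext R X A \<inter> F = ideal_star R (Ph R F) X A))
       \<and> ((\<forall>X\<in>obj R. \<forall>A\<in>obj R. ext R X A \<inter> F = ideal_star R (Ph R F) X A) \<longleftrightarrow>
            perpE R (Ph R F) = F_inj R F)"
proof -
  interpret extriangulated_subfunctor R F
    using assms(1,4) by unfold_locales
  show ?thesis
    using F_eq_Ph_star_if_enough_special_injective_morphisms
      enough_special_injective_morphisms_if_F_eq_Ph_star
      perpE_Ph_eq_F_inj_if_F_eq_Ph_star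
      F_eq_Ph_star_if_perpE_Ph_eq_F_inj assms
    by blast
qed

end
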